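(* Let $\mathfrak{R}$ be an alternative ring containing a nontrivial idempotent $e_1$, with Peirce decomposition $\mathfrak{R}=\mathfrak{R}_{11}\oplus\mathfrak{R}_{12}\oplus\mathfrak{R}_{21}\oplus\mathfrak{R}_{22}$, which satisfies: (i) if $a_{11}\in\mathfrak{R}_{11}$, $a_{22}\in\mathfrak{R}_{22}$ and $[a_{11}+a_{22},\mathfrak{R}_{12}]=0$, then $a_{11}+a_{22}\in\mathcal{Z}(\mathfrak{R})$; (ii) if $a_{11}\in\mathfrak{R}_{11}$, $a_{22}\in\mathfrak{R}_{22}$ and $[a_{11}+a_{22},\mathfrak{R}_{21}]=0$, then $a_{11}+a_{22}\in\mathcal{Z}(\mathfrak{R})$. Then every multiplicative Lie $3$-derivation $\mathcal{D}$ of $\mathfrak{R}$ is almost additive, i.e. $\mathcal{D}(a+b)-\mathcal{D}(a)-\mathcal{D}(b)\in\mathcal{Z}(\mathfrak{R})$ for all $a,b\in\mathfrak{R}$.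
   Context: Rings are not assumed associative or unital. $\mathfrak{R}$ is alternative if $(x,x,y)=0=(y,x,x)$ for all $x,y$, where $(x,y,z)=(xy)z-x(yz)$. $[x,y]=xy-yx$; $\mathcal{Z}(\mathfrak{R})=\{r: [r,x]=0\ \forall x\in\mathfrak{R}\}$. A map $\mathcal{D}\colon\mathfrak{R}\to\mathfrak{R}$, not necessarily additive, is a multiplicative Lie $3$-derivation if $\mathcal{D}([[x,y],w])=[[\mathcal{D}(x),y],w]+[[x,\mathcal{D}(y)],w]+[[x,y],\mathcal{D}(w)]$ for all $x,y,w\in\mathfrak{R}$. A nontrivial idempotent is $e_1\ne0$ with $e_1^2=e_1$ which is not a multiplicative identity. With $e_2a:=a-e_1a$, $ae_2:=a-ae_1$, set $\mathfrak{R}_{ij}=e_i\mathfrak{R}e_j$ ($i,j=1,2$), so $\mathfrak{R}=\bigoplus_{i,j}\mathfrak{R}_{ij}$. *)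

theory Defs
  imports Main
begin

text \<open>Rings are neither assumed associative nor unital: we use an additive abelian
group with a multiplication that is biadditive (distributive on both sides).\<close>

definition assoc3 :: "'a::{ab_group_add,times} \<Rightarrow> 'a \<Rightarrow> 'a \<Rightarrow> 'a" where
  "assoc3 x y z = (x * y) * z - x * (y * z)"

definition nonassoc_ring :: "'a::{ab_group_add,times} itself \<Rightarrow> bool" where
  "nonassoc_ring _ \<longleftrightarrow> (\<forall>x y z::'a. x * (y + z) = x * y + x * z \<and> (x + y) * z = x * z + y * z)"

definition alternative_ring :: "'a::{ab_group_add,times} itself \<Rightarrow> bool" where
  "alternative_ring T \<longleftrightarrow> nonassoc_ring T \<and>
     (\<forall>x y::'a. assoc3 x x y = 0 \<and> assoc3 y x x = 0)"

definition comm :: "'a::{ab_group_add,times} \<Rightarrow> 'a \<Rightarrow> 'a" where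
  "comm x y = x * y - y * x"

definition center :: "'a::{ab_group_add,times} set" where
  "center = {r. \<forall>x. comm r x = 0}"

definition mult_lie_3_derivation :: "('a::{ab_group_add,times} \<Rightarrow> 'a) \<Rightarrow> bool" where
  "mult_lie_3_derivation D \<longleftrightarrow> (\<forall>x y w.
     D (comm (comm x y) w) = comm (comm (D x) y) w + comm (comm x (D y)) w + comm (comm x y) (D w))"

definition nontrivial_idempotent :: "'a::{ab_group_add,times} \<Rightarrow> bool" where
  "nontrivial_idempotent e \<longleftrightarrow> e \<noteq> 0 \<and> e * e = e \<and> \<not> (\<forall>x. e * x = x \<and> x * e = x)"

text \<open>Left action of e_i and right action of e_j (e_2 a := a - e_1 a, a e_2 := a - a e_1).\<close>
definition lmul :: "'a::{ab_group_add,times} \<Rightarrow> nat \<Rightarrow> 'a \<Rightarrow> 'a" where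
  "lmul e i a = (if i = 1 then e * a else a - e * a)"

definition rmul :: "'a::{ab_group_add,times} \<Rightarrow> nat \<Rightarrow> 'a \<Rightarrow> 'a" where
  "rmul e j a = (if j = 1 then a * e else a - a * e)"

text \<open>Peirce component R_ij = e_i R e_j, with e_i a e_j read as (e_i a) e_j
  (which equals e_i (a e_j) in an alternative ring).\<close>
definition peirce :: "'a::{ab_group_add,times} \<Rightarrow> nat \<Rightarrow> nat \<Rightarrow> 'a set" where
  "peirce e i j = {rmul e j (lmul e i a) | a. True}"

end

theory Submission
  imports Defs
begin

(* Write d(a, b) = D(a + b) - D a - D b. Because D is a Lie 3-derivation and commutators are
   biadditive, [[d(a, b), y], w] = d([[a, y], w], [[b, y], w]). Hypotheses (i) and (ii) reduce
   centrality of z to [[z, e], e] = 0 (which puts z in R11 + R22) together with [[z, t], e] = 0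
   for all t in R21 (or all t in R12). This gives first that d(e, x) is central for x in R12 or
   R21, and then, via [[e + a, e - b], e] = a + b for a in R12, b in R21 (plus a correction term
   in R21 or R12 when a, b lie in the same component), that D is additive on R12 + R21. Every
   [x, e] lies in R12 + R21, so d([[a, y], e], [[b, y], e]) = 0 for all y, and d(a, b) is central. *)

(* Otherwise the simplifier turns peirce e 1 2 into peirce e (Suc 0) 2, where mem_peirce no
   longer applies. *)
declare One_nat_def [simp del]

lemma rmul_lmul_in_peirce: "rmul e j (lmul e i x) \<in> peirce e i j"
  by (auto simp: peirce_def)

lemma comm_antisym: "comm x y = - comm y x"
  by (simp add: comm_def)

lemma comm_self [simp]: "comm x x = 0"
  by (simp add: comm_def)

lemma center_comm_left: "z \<in> center \<Longrightarrow> comm z x = 0"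
  by (simp add: center_def)

lemma center_comm_right: "z \<in> center \<Longrightarrow> comm x z = 0"
  by (simp add: center_def comm_antisym [of x z])

locale nonassoc =
  fixes T :: "'a::{ab_group_add,times} itself"
  assumes nonassoc_ring: "nonassoc_ring T"
begin

lemma distrib_left [simp]: "(x::'a) * (y + z) = x * y + x * z"
  using nonassoc_ring by (simp add: nonassoc_ring_def)

lemma distrib_right [simp]: "((x::'a) + y) * z = x * z + y * z"
  using nonassoc_ring by (simp add: nonassoc_ring_def)

lemma mult_zero_right [simp]: "(x::'a) * 0 = 0"
  using distrib_left [of x 0 0] by simp

lemma mult_zero_left [simp]: "0 * (x::'a) = 0"
  using distrib_right [of 0 0 x] by simp

lemma mult_minus_right [simp]: "(x::'a) * - y = - (x * y)"
  using distrib_left [of x y "- y"] by (simp add: neg_eq_iff_add_eq_0 [of "x * y", symmetric])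

lemma mult_minus_left [simp]: "- (x::'a) * y = - (x * y)"
  using distrib_right [of x "- x" y] by (simp add: neg_eq_iff_add_eq_0 [of "x * y", symmetric])

lemma right_diff_distrib [simp]: "(x::'a) * (y - z) = x * y - x * z"
  using distrib_left [of x y "- z"] by simp

lemma left_diff_distrib [simp]: "((x::'a) - y) * z = x * z - y * z"
  using distrib_right [of x "- y" z] by simp

lemma comm_add_left [simp]: "comm ((x::'a) + y) z = comm x z + comm y z"
  by (simp add: comm_def)

lemma comm_add_right [simp]: "comm (x::'a) (y + z) = comm x y + comm x z"
  by (simp add: comm_def)

lemma comm_minus_left [simp]: "comm (- (x::'a)) y = - comm x y"
  by (simp add: comm_def)

lemma comm_minus_right [simp]: "comm (x::'a) (- y) = - comm x y"
  by (simp add: comm_def)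

lemma comm_diff_left [simp]: "comm ((x::'a) - y) z = comm x z - comm y z"
  by (simp add: comm_def)

lemma comm_diff_right [simp]: "comm (x::'a) (y - z) = comm x y - comm x z"
  by (simp add: comm_def)

lemma comm_zero_left [simp]: "comm 0 (x::'a) = 0"
  by (simp add: comm_def)

lemma comm_zero_right [simp]: "comm (x::'a) 0 = 0"
  by (simp add: comm_def)

lemma peirce_decomposition:
  "(x::'a) = rmul e 1 (lmul e 1 x) + rmul e 2 (lmul e 1 x) + rmul e 1 (lmul e 2 x) + rmul e 2 (lmul e 2 x)"
  by (simp add: rmul_def lmul_def)

lemma comm_right_decomposition:
  "comm (x::'a) e = rmul e 1 (lmul e 2 x) - rmul e 2 (lmul e 1 x)"
  by (simp add: comm_def rmul_def lmul_def)

end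

definition add_defect :: "('a::ab_group_add \<Rightarrow> 'a) \<Rightarrow> 'a \<Rightarrow> 'a \<Rightarrow> 'a" where
  "add_defect D a b = D (a + b) - D a - D b"

locale lie_3_derivation = nonassoc T for T :: "'a::{ab_group_add,times} itself" +
  fixes D :: "'a \<Rightarrow> 'a"
  assumes lie_3_derivation: "mult_lie_3_derivation D"
begin

lemma D_comm_comm:
  "D (comm (comm x y) w) = comm (comm (D x) y) w + comm (comm x (D y)) w + comm (comm x y) (D w)"
  using lie_3_derivation by (simp add: mult_lie_3_derivation_def)

lemma D_zero [simp]: "D 0 = 0"
  using D_comm_comm [of 0 0 0] by simp

lemma comm_comm_add_defect:
  "comm (comm (add_defect D a b) y) w = add_defect D (comm (comm a y) w) (comm (comm b y) w)"
proof -
  have "comm (comm a y) w + comm (comm b y) w = comm (comm (a + b) y) w"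
    by simp
  then show ?thesis
    by (simp only: add_defect_def D_comm_comm) (simp add: algebra_simps)
qed

lemma D_comm_comm_add_add:
  assumes "add_defect D x1 x2 \<in> center" "add_defect D y1 y2 \<in> center"
  shows "D (comm (comm (x1 + x2) (y1 + y2)) w) =
    D (comm (comm x1 y1) w) + D (comm (comm x1 y2) w) + D (comm (comm x2 y1) w) + D (comm (comm x2 y2) w)"
proof -
  have "D (x1 + x2) = D x1 + D x2 + add_defect D x1 x2" "D (y1 + y2) = D y1 + D y2 + add_defect D y1 y2"
    by (simp_all add: add_defect_def)
  then show ?thesis
    unfolding D_comm_comm
    using center_comm_left [OF assms(1)] center_comm_right [OF assms(2)]
    by (simp add: algebra_simps)
qed

end

locale alternative =
  fixes T :: "'a::{ab_group_add,times} itself"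
  assumes alternative_ring: "alternative_ring T"

sublocale alternative \<subseteq> nonassoc
  using alternative_ring by unfold_locales (simp add: alternative_ring_def)

context alternative
begin

lemma left_alternative: "((x::'a) * x) * y = x * (x * y)"
  using alternative_ring by (simp add: alternative_ring_def assoc3_def)

lemma right_alternative: "((y::'a) * x) * x = y * (x * x)"
  using alternative_ring by (simp add: alternative_ring_def assoc3_def)

lemma assoc3_skew_left: "assoc3 (x::'a) y z = - assoc3 y x z"
  using left_alternative [of "x + y" z] by (simp add: assoc3_def left_alternative algebra_simps)

lemma assoc3_skew_right: "assoc3 (x::'a) y z = - assoc3 x z y"
  using right_alternative [of x "y + z"] by (simp add: assoc3_def right_alternative algebra_simps)

lemma flexible: "((x::'a) * y) * x = x * (y * x)"
  using assoc3_skew_right [of x x y] left_alternative [of x y] by (simp add: assoc3_def)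

lemma left_mult_product: "(z::'a) * (x * y) = (z * x) * y + (x * z) * y - x * (z * y)"
  using assoc3_skew_left [of z x y] by (simp add: assoc3_def algebra_simps)

lemma right_mult_product: "((x::'a) * y) * z = x * (y * z) + x * (z * y) - (x * z) * y"
  using assoc3_skew_right [of x z y] by (simp add: assoc3_def algebra_simps)

lemma flexible_linear: "((x::'a) * z) * y - x * (z * y) = y * (z * x) - (y * z) * x"
proof -
  have "assoc3 x z y = - assoc3 y z x"
    using assoc3_skew_left [of x z y] assoc3_skew_right [of z x y] assoc3_skew_left [of z y x]
    by simp
  then show ?thesis
    by (simp add: assoc3_def algebra_simps)
qed

end

locale alternative_idempotent = alternative T for T :: "'a::{ab_group_add,times} itself" +
  fixes e :: 'a
  assumes idem: "e * e = e"
begin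

lemma idem_left [simp]: "e * (e * x) = e * x"
  using left_alternative [of e x] by (simp add: idem)

lemma idem_right [simp]: "(x * e) * e = x * e"
  using right_alternative [of x e] by (simp add: idem)

lemma mem_peirce_iff: "x \<in> peirce e i j \<longleftrightarrow> lmul e i x = x \<and> rmul e j x = x"
proof
  assume "x \<in> peirce e i j"
  then obtain a where "x = rmul e j (lmul e i a)"
    by (auto simp: peirce_def)
  then show "lmul e i x = x \<and> rmul e j x = x"
    by (simp add: lmul_def rmul_def flexible)
next
  assume "lmul e i x = x \<and> rmul e j x = x"
  then have "x = rmul e j (lmul e i x)"
    by simp
  then show "x \<in> peirce e i j"
    unfolding peirce_def by blast
qed

lemma mem_peirce [simp]:
  "x \<in> peirce e 1 1 \<longleftrightarrow> e * x = x \<and> x * e = x"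
  "x \<in> peirce e 1 2 \<longleftrightarrow> e * x = x \<and> x * e = 0"
  "x \<in> peirce e 2 1 \<longleftrightarrow> e * x = 0 \<and> x * e = x"
  "x \<in> peirce e 2 2 \<longleftrightarrow> e * x = 0 \<and> x * e = 0"
  by (auto simp: mem_peirce_iff lmul_def rmul_def)

lemma comm_idem_12: "x \<in> peirce e 1 2 \<Longrightarrow> comm x e = - x"
  by (simp add: comm_def)

lemma comm_idem_21: "x \<in> peirce e 2 1 \<Longrightarrow> comm x e = x"
  by (simp add: comm_def)

lemma comm_comm_idem:
  "comm (comm x e) e = rmul e 1 (lmul e 2 x) + rmul e 2 (lmul e 1 x)"
  using comm_idem_21 [OF rmul_lmul_in_peirce] comm_idem_12 [OF rmul_lmul_in_peirce]
  by (simp add: comm_right_decomposition [of x e] add.commute)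

lemma comm_idem_off_diagonal:
  obtains u v where "u \<in> peirce e 1 2" "v \<in> peirce e 2 1" "comm x e = u + v"
proof
  show "- rmul e 2 (lmul e 1 x) \<in> peirce e 1 2"
    using rmul_lmul_in_peirce [of e 2 1 x] by simp
  show "comm x e = - rmul e 2 (lmul e 1 x) + rmul e 1 (lmul e 2 x)"
    by (simp add: comm_right_decomposition)
qed (rule rmul_lmul_in_peirce)

lemma diagonal_if_comm_comm_idem:
  assumes "comm (comm x e) e = 0"
  obtains a b where "a \<in> peirce e 1 1" "b \<in> peirce e 2 2" "x = a + b"
proof
  define u where "u = rmul e 2 (lmul e 1 x)"
  define v where "v = rmul e 1 (lmul e 2 x)"
  have u: "u \<in> peirce e 1 2" and v: "v \<in> peirce e 2 1"
    unfolding u_def v_def by (rule rmul_lmul_in_peirce)+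
  have sum: "v + u = 0"
    using assms by (simp add: comm_comm_idem u_def v_def)
  have "u = e * (v + u)"
    using u v by simp
  with sum have "u = 0" and "v = 0"
    by simp_all
  then show "x = rmul e 1 (lmul e 1 x) + rmul e 2 (lmul e 2 x)"
    using peirce_decomposition [of x e] by (simp add: u_def v_def)
qed (rule rmul_lmul_in_peirce)+

lemma comm_comm_12_21:
  assumes "x \<in> peirce e 1 2" "t \<in> peirce e 2 1"
  shows "comm (comm x t) e = 0"
  using assms left_mult_product [of e x t] left_mult_product [of e t x]
    right_mult_product [of x t e] right_mult_product [of t x e]
  by (simp add: comm_def)

lemma comm_diagonal_12:
  assumes "a \<in> peirce e 1 1" "b \<in> peirce e 2 2" "t \<in> peirce e 1 2"
  shows "comm (a + b) t \<in> peirce e 1 2"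
  using assms flexible_linear [of t e a] flexible_linear [of b e t]
    left_mult_product [of e a t] right_mult_product [of a t e]
    left_mult_product [of e t b] right_mult_product [of t b e]
  by (simp add: comm_def)

lemma comm_diagonal_21:
  assumes "a \<in> peirce e 1 1" "b \<in> peirce e 2 2" "t \<in> peirce e 2 1"
  shows "comm (a + b) t \<in> peirce e 2 1"
  using assms flexible_linear [of a e t] flexible_linear [of t e b]
    left_mult_product [of e t a] right_mult_product [of t a e]
    left_mult_product [of e b t] right_mult_product [of b t e]
  by (simp add: comm_def)

lemma comm_12_12:
  assumes "a \<in> peirce e 1 2" "b \<in> peirce e 1 2"
  shows "comm a b \<in> peirce e 2 1"
  using assms left_mult_product [of e a b] left_mult_product [of e b a]
    right_mult_product [of a b e] right_mult_product [of b a e]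
  by (simp add: comm_def)

lemma comm_21_21:
  assumes "a \<in> peirce e 2 1" "b \<in> peirce e 2 1"
  shows "comm a b \<in> peirce e 1 2"
  using assms left_mult_product [of e a b] left_mult_product [of e b a]
    right_mult_product [of a b e] right_mult_product [of b a e]
  by (simp add: comm_def)

end

locale peirce_centralizing = alternative_idempotent +
  assumes central_12: "\<And>a b. a \<in> peirce e 1 1 \<Longrightarrow> b \<in> peirce e 2 2 \<Longrightarrow>
      (\<forall>x\<in>peirce e 1 2. comm (a + b) x = 0) \<Longrightarrow> a + b \<in> center"
    and central_21: "\<And>a b. a \<in> peirce e 1 1 \<Longrightarrow> b \<in> peirce e 2 2 \<Longrightarrow>
      (\<forall>x\<in>peirce e 2 1. comm (a + b) x = 0) \<Longrightarrow> a + b \<in> center"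
begin

lemma center_if_comm_comm_12:
  assumes "comm (comm z e) e = 0" "\<And>t. t \<in> peirce e 1 2 \<Longrightarrow> comm (comm z t) e = 0"
  shows "z \<in> center"
proof -
  obtain a b where a: "a \<in> peirce e 1 1" and b: "b \<in> peirce e 2 2" and z: "z = a + b"
    using assms(1) by (rule diagonal_if_comm_comm_idem)
  have "comm (a + b) t = 0" if t: "t \<in> peirce e 1 2" for t
  proof -
    have "comm (a + b) t = - comm (comm (a + b) t) e"
      using comm_idem_12 [OF comm_diagonal_12 [OF a b t]] by simp
    also have "\<dots> = 0"
      using assms(2) [OF t] z by simp
    finally show ?thesis .
  qed
  then show ?thesis
    using central_12 a b z by blast
qed

lemma center_if_comm_comm_21:
  assumes "comm (comm z e) e = 0" "\<And>t. t \<in> peirce e 2 1 \<Longrightarrow> comm (comm z t) e = 0"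
  shows "z \<in> center"
proof -
  obtain a b where a: "a \<in> peirce e 1 1" and b: "b \<in> peirce e 2 2" and z: "z = a + b"
    using assms(1) by (rule diagonal_if_comm_comm_idem)
  have "comm (a + b) t = 0" if t: "t \<in> peirce e 2 1" for t
  proof -
    have "comm (a + b) t = comm (comm (a + b) t) e"
      using comm_idem_21 [OF comm_diagonal_21 [OF a b t]] by simp
    also have "\<dots> = 0"
      using assms(2) [OF t] z by simp
    finally show ?thesis .
  qed
  then show ?thesis
    using central_21 a b z by blast
qed

end

locale lie_3_derivation_peirce = peirce_centralizing T e + lie_3_derivation T D
  for T :: "'a::{ab_group_add,times} itself" and e D
begin

lemma add_defect_idem_12_central:
  assumes x: "x \<in> peirce e 1 2"
  shows "add_defect D e x \<in> center"
proof (rule center_if_comm_comm_21)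
  show "comm (comm (add_defect D e x) e) e = 0"
    unfolding comm_comm_add_defect using x by (simp add: comm_idem_12 add_defect_def)
  fix t assume "t \<in> peirce e 2 1"
  then show "comm (comm (add_defect D e x) t) e = 0"
    unfolding comm_comm_add_defect using comm_comm_12_21 [OF x] by (simp add: add_defect_def)
qed

lemma add_defect_idem_21_central:
  assumes x: "x \<in> peirce e 2 1"
  shows "add_defect D e x \<in> center"
proof (rule center_if_comm_comm_12)
  show "comm (comm (add_defect D e x) e) e = 0"
    unfolding comm_comm_add_defect using x by (simp add: comm_idem_21 add_defect_def)
  fix t assume "t \<in> peirce e 1 2"
  then show "comm (comm (add_defect D e x) t) e = 0"
    unfolding comm_comm_add_defect using comm_comm_12_21 [OF _ x] comm_antisym [of x t]
    by (simp add: add_defect_def)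
qed

lemma D_comm_comm_idem_add:
  assumes "x \<in> peirce e 1 2 \<or> x \<in> peirce e 2 1" "y \<in> peirce e 1 2 \<or> y \<in> peirce e 2 1"
  shows "D (comm (comm (e + x) (e + y)) e) =
    D (comm (comm e y) e) + D (comm (comm x e) e) + D (comm (comm x y) e)"
proof -
  have "add_defect D e x \<in> center" "add_defect D e y \<in> center"
    using assms add_defect_idem_12_central add_defect_idem_21_central by blast+
  then show ?thesis
    using D_comm_comm_add_add [of e x e y e] by simp
qed

lemma D_add_12_21:
  assumes a: "a \<in> peirce e 1 2" and b: "b \<in> peirce e 2 1"
  shows "D (a + b) = D a + D b"
proof -
  note comms = comm_idem_12 [OF a] comm_idem_21 [OF b] comm_comm_12_21 [OF a b] comm_antisym [of e b]
  have "D (a + b) = D (comm (comm (e + a) (e + - b)) e)"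
    using comms by simp
  also have "\<dots> = D (comm (comm e (- b)) e) + D (comm (comm a e) e) + D (comm (comm a (- b)) e)"
    using a b by (intro D_comm_comm_idem_add) simp_all
  also have "\<dots> = D b + D a"
    using comms by simp
  finally show ?thesis
    by (simp add: add.commute)
qed

lemma D_add_12:
  assumes a: "a \<in> peirce e 1 2" and b: "b \<in> peirce e 1 2"
  shows "D (a + b) = D a + D b"
proof -
  define c where "c = comm a (- b)"
  have c: "c \<in> peirce e 2 1"
    unfolding c_def using a b by (intro comm_12_12) simp_all
  note comms = comm_idem_12 [OF a] comm_idem_12 [OF b] comm_idem_21 [OF c] comm_antisym [of e b]
  have "D ((a + b) + c) = D (comm (comm (e + a) (e + - b)) e)"
    using comms by (simp add: c_def algebra_simps)
  also have "\<dots> = D (comm (comm e (- b)) e) + D (comm (comm a e) e) + D (comm (comm a (- b)) e)"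
    using a b by (intro D_comm_comm_idem_add) simp_all
  also have "\<dots> = D b + D a + D c"
    using comms by (simp add: c_def)
  finally have "D ((a + b) + c) = D b + D a + D c" .
  moreover have "D ((a + b) + c) = D (a + b) + D c"
    using a b c by (intro D_add_12_21) simp_all
  ultimately show ?thesis
    by (simp add: add.commute)
qed

lemma D_add_21:
  assumes a: "a \<in> peirce e 2 1" and b: "b \<in> peirce e 2 1"
  shows "D (a + b) = D a + D b"
proof -
  define c where "c = - comm a (- b)"
  have c: "c \<in> peirce e 1 2"
    unfolding c_def using comm_21_21 [of a "- b"] a b by simp
  note comms = comm_idem_21 [OF a] comm_idem_21 [OF b] comm_idem_12 [OF c] comm_antisym [of e b]
  have "D (c + (a + b)) = D (comm (comm (e + a) (e + - b)) e)"
    using comms by (simp add: c_def algebra_simps)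
  also have "\<dots> = D (comm (comm e (- b)) e) + D (comm (comm a e) e) + D (comm (comm a (- b)) e)"
    using a b by (intro D_comm_comm_idem_add) simp_all
  also have "\<dots> = D b + D a + D c"
    using comms by (simp add: c_def)
  finally have "D (c + (a + b)) = D b + D a + D c" .
  moreover have "D (c + (a + b)) = D c + D (a + b)"
    using a b c by (intro D_add_12_21) simp_all
  ultimately show ?thesis
    by (simp add: algebra_simps)
qed

lemma add_defect_off_diagonal:
  assumes "u1 \<in> peirce e 1 2" "u2 \<in> peirce e 2 1" "v1 \<in> peirce e 1 2" "v2 \<in> peirce e 2 1"
  shows "add_defect D (u1 + u2) (v1 + v2) = 0"
proof -
  have "D ((u1 + u2) + (v1 + v2)) = D ((u1 + v1) + (u2 + v2))"
    by (simp add: algebra_simps)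
  also have "\<dots> = D (u1 + v1) + D (u2 + v2)"
    using assms by (intro D_add_12_21) simp_all
  also have "\<dots> = D (u1 + u2) + D (v1 + v2)"
    using assms by (simp add: D_add_12 D_add_21 D_add_12_21)
  finally show ?thesis
    by (simp add: add_defect_def)
qed

lemma add_defect_comm_idem: "add_defect D (comm a e) (comm b e) = 0"
proof -
  obtain u1 u2 where "u1 \<in> peirce e 1 2" "u2 \<in> peirce e 2 1" "comm a e = u1 + u2"
    by (rule comm_idem_off_diagonal)
  moreover obtain v1 v2 where "v1 \<in> peirce e 1 2" "v2 \<in> peirce e 2 1" "comm b e = v1 + v2"
    by (rule comm_idem_off_diagonal)
  ultimately show ?thesis
    by (simp add: add_defect_off_diagonal)
qed

theorem add_defect_central: "add_defect D a b \<in> center"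
  by (rule center_if_comm_comm_21) (simp_all add: comm_comm_add_defect add_defect_comm_idem)

end

theorem corollary2p7:
  fixes e1 :: "'a::{ab_group_add,times}"
    and D :: "'a \<Rightarrow> 'a"
  assumes alt: "alternative_ring TYPE('a)"
    and idem: "nontrivial_idempotent e1"
    and cond1: "\<And>a11 a22. a11 \<in> peirce e1 1 1 \<Longrightarrow> a22 \<in> peirce e1 2 2 \<Longrightarrow>
                  (\<forall>x\<in>peirce e1 1 2. comm (a11 + a22) x = 0) \<Longrightarrow> a11 + a22 \<in> center"
    and cond2: "\<And>a11 a22. a11 \<in> peirce e1 1 1 \<Longrightarrow> a22 \<in> peirce e1 2 2 \<Longrightarrow>
                  (\<forall>x\<in>peirce e1 2 1. comm (a11 + a22) x = 0) \<Longrightarrow> a11 + a22 \<in> center"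
    and der: "mult_lie_3_derivation D"
  shows "\<forall>a b. D (a + b) - D a - D b \<in> center"
proof -
  interpret lie_3_derivation_peirce "TYPE('a)" e1 D
  proof unfold_locales
    show "nonassoc_ring TYPE('a)"
      using alt by (simp add: alternative_ring_def)
    show "e1 * e1 = e1"
      using idem by (simp add: nontrivial_idempotent_def)
  qed (fact alt cond1 cond2 der)+
  show ?thesis
    using add_defect_central by (simp add: add_defect_def)
qed

end
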